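(* Let $\mathcal H$ be an $n$-dimensional (real or complex) inner product space, $P:\mathcal H\to\mathcal H$ a linear projection ($P^2=P$) and $Q=I-P$. Let $r_0$ and $r_1$ be the multiplicities of the eigenvalues $0$ and $1$ of $P^\dagger P$ (zero if not an eigenvalue). Then $Q^\dagger Q$ has eigenvalue $0$ with multiplicity $n-r_0$ and eigenvalue $1$ with multiplicity $2r_0+r_1-n$.
   Context: $P^\dagger$, $Q^\dagger$ denote adjoints with respect to the inner product; $P$ need not be an orthogonal projection; $I$ is the identity. Multiplicities are those of eigenvalues of the self-adjoint positive semidefinite operators $P^\dagger P$, $Q^\dagger Q$. *)

theory Defs
  imports "Jordan_Normal_Form.Schur_Decomposition" "Jordan_Normal_Form.Char_Poly"
begin

text \<open>Operators on an n-dimensional inner product space are represented by their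
 n x n matrices w.r.t. an orthonormal basis; the adjoint is then the conjugate
 transpose (mat_adjoint).\<close>

definition eig_mult :: "'a :: field mat \<Rightarrow> 'a \<Rightarrow> nat" where
  "eig_mult A a = order a (char_poly A)"

end

theory Submission
  imports Defs
    Jordan_Normal_Form.Jordan_Normal_Form_Uniqueness
    Jordan_Normal_Form.Jordan_Normal_Form_Existence
    Jordan_Normal_Form.DL_Rank
begin

(* Let A = P^\<dagger>P and B = Q^\<dagger>Q with Q = 1 - P, and put F = Q^\<dagger>P, G = P^\<dagger>Q.
   Since P and P^\<dagger> are idempotent one has the ring identities
     B F = F A,   G F = A^2 - A,   and symmetrically   A G = G B,   F G = B^2 - B.
   For e \<notin> {0,1}, F maps the generalized e-eigenspace of A into that of B, injectively
   because a vector killed by F is killed by A^2 - A, which is coprime to (x - e)^k.  By symmetry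
   A and B have the same algebraic multiplicity at every e \<notin> {0,1}; since both characteristic
   polynomials split into n linear factors over the complex numbers,
     mult_B(0) + mult_B(1) = mult_A(0) + mult_A(1).
   For a Gram matrix M^\<dagger>M the eigenvalue 0 is semisimple with eigenspace ker M, so
   mult_A(0) = dim ker P and mult_B(0) = dim ker Q; the same counting applied to the idempotent P
   (whose only eigenvalues are 0 and 1) gives dim ker P + dim ker Q = n.  These two equations are
   the theorem; the real case follows because characteristic polynomials commute with the
   embedding of the reals into the complex numbers. *)

lemma conjugate_one [simp]: "conjugate (1::'a::conjugatable_field) = 1"
proof -
  let ?c = "conjugate (1::'a)"
  have "?c = ?c * ?c" by (subst conjugate_dist_mul[symmetric]) simp
  moreover have "?c \<noteq> 0" by (simp only: conjugate_zero_iff one_neq_zero not_False_eq_True)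
  ultimately show ?thesis by (metis mult_cancel_left1)
qed

lemma conjugate_minus: "conjugate ((a::'a::conjugatable_field) - b) = conjugate a - conjugate b"
  by (simp only: diff_conv_add_uminus conjugate_dist_add conjugate_neg)

lemma mat_adjoint_dim [simp]:
  "dim_row (mat_adjoint A) = dim_col A" "dim_col (mat_adjoint A) = dim_row A"
  unfolding mat_adjoint_def by (auto simp: mat_of_rows_def)

lemma mat_adjoint_carrier [simp]: "A \<in> carrier_mat n m \<Longrightarrow> mat_adjoint A \<in> carrier_mat m n"
  by auto

lemma mat_adjoint_index [simp]:
  "i < dim_col A \<Longrightarrow> j < dim_row A \<Longrightarrow> mat_adjoint A $$ (i,j) = conjugate (A $$ (j,i))"
  unfolding mat_adjoint_def by (auto simp: mat_of_rows_def cols_def)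

lemma mat_adjoint_index_carrier:
  "A \<in> carrier_mat n m \<Longrightarrow> i < m \<Longrightarrow> j < n \<Longrightarrow> mat_adjoint A $$ (i,j) = conjugate (A $$ (j,i))"
  by auto

lemma mat_adjoint_adjoint: "mat_adjoint (mat_adjoint A) = A"
  by (rule eq_matI) auto

lemma mat_adjoint_one: "mat_adjoint (1\<^sub>m n :: 'a::conjugatable_field mat) = 1\<^sub>m n"
  by (rule eq_matI) auto

lemma mat_adjoint_minus:
  fixes A B :: "'a::conjugatable_field mat"
  assumes "A \<in> carrier_mat n m" and "B \<in> carrier_mat n m"
  shows "mat_adjoint (A - B) = mat_adjoint A - mat_adjoint B"
  by (rule eq_matI) (use assms in \<open>auto simp: conjugate_minus\<close>)

lemma mat_adjoint_mult:
  fixes A B :: "'a::conjugatable_field mat"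
  assumes A: "A \<in> carrier_mat n m" and B: "B \<in> carrier_mat m k"
  shows "mat_adjoint (A * B) = mat_adjoint B * mat_adjoint A"
proof (rule eq_matI)
  fix i j assume "i < dim_row (mat_adjoint B * mat_adjoint A)" "j < dim_col (mat_adjoint B * mat_adjoint A)"
  hence i: "i < k" and j: "j < n" using A B by auto
  have "mat_adjoint (A * B) $$ (i, j) = (\<Sum>l = 0..<m. conjugate (B $$ (l,i)) * conjugate (A $$ (j,l)))"
    using A B i j by (simp add: scalar_prod_def sum_conjugate conjugate_dist_mul mult.commute)
  also have "\<dots> = (mat_adjoint B * mat_adjoint A) $$ (i,j)"
    using A B i j by (simp add: scalar_prod_def)
  finally show "mat_adjoint (A * B) $$ (i, j) = (mat_adjoint B * mat_adjoint A) $$ (i, j)" .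
next
  show "dim_row (mat_adjoint (A * B)) = dim_row (mat_adjoint B * mat_adjoint A)"
    "dim_col (mat_adjoint (A * B)) = dim_col (mat_adjoint B * mat_adjoint A)"
    using A B by auto
qed

lemma mat_adjoint_sprod:
  fixes A :: "'a::conjugatable_field mat"
  assumes A: "A \<in> carrier_mat n m" and v: "v \<in> carrier_vec m" and w: "w \<in> carrier_vec n"
  shows "(A *\<^sub>v v) \<bullet>c w = v \<bullet>c (mat_adjoint A *\<^sub>v w)"
proof -
  have "(A *\<^sub>v v) \<bullet>c w = (\<Sum>i = 0..<n. (\<Sum>j = 0..<m. A $$ (i,j) * v $ j) * conjugate (w $ i))"
    using A v w by (simp add: scalar_prod_def)
  also have "\<dots> = (\<Sum>i = 0..<n. \<Sum>j = 0..<m. v $ j * (A $$ (i,j) * conjugate (w $ i)))"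
    by (rule sum.cong[OF refl], simp add: sum_distrib_right, rule sum.cong[OF refl], simp add: mult_ac)
  also have "\<dots> = (\<Sum>j = 0..<m. \<Sum>i = 0..<n. v $ j * (A $$ (i,j) * conjugate (w $ i)))"
    by (rule sum.swap)
  also have "\<dots> = v \<bullet>c (mat_adjoint A *\<^sub>v w)"
    using A v w mat_adjoint_carrier[OF A]
    by (simp add: scalar_prod_def mat_adjoint_index_carrier sum_conjugate conjugate_dist_mul sum_distrib_left)
  finally show ?thesis .
qed

text \<open>A Gram matrix \<open>M\<^sup>\<dagger>M\<close> has the same kernel as \<open>M\<close>, since \<open>M\<^sup>\<dagger>M v = 0\<close> gives
  \<open>\<parallel>Mv\<parallel>\<^sup>2 = v \<bullet>c M\<^sup>\<dagger>M v = 0\<close>.\<close>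

lemma gram_kernel_vec:
  fixes M :: "'a::conjugatable_ordered_field mat"
  assumes M: "M \<in> carrier_mat n m" and v: "v \<in> carrier_vec m"
    and zero: "(mat_adjoint M * M) *\<^sub>v v = 0\<^sub>v m"
  shows "M *\<^sub>v v = 0\<^sub>v n"
proof -
  have Mv: "M *\<^sub>v v \<in> carrier_vec n" using M v by auto
  have "(M *\<^sub>v v) \<bullet>c (M *\<^sub>v v) = v \<bullet>c ((mat_adjoint M * M) *\<^sub>v v)"
    using mat_adjoint_sprod[OF M v Mv] assoc_mult_mat_vec[OF mat_adjoint_carrier[OF M] M v] by simp
  also have "\<dots> = 0" unfolding zero using v by simp
  finally show ?thesis using conjugate_square_eq_0_vec[OF Mv] by simp
qed

lemma gram_kernel:
  fixes M :: "'a::conjugatable_ordered_field mat"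
  assumes M: "M \<in> carrier_mat n m"
  shows "mat_kernel (mat_adjoint M * M) = mat_kernel M"
proof
  have G: "mat_adjoint M * M \<in> carrier_mat m m" using M by auto
  show "mat_kernel (mat_adjoint M * M) \<subseteq> mat_kernel M"
    using gram_kernel_vec[OF M] mat_kernelD[OF G] by (auto intro!: mat_kernelI[OF M])
  show "mat_kernel M \<subseteq> mat_kernel (mat_adjoint M * M)"
    by (rule mat_kernel_mult_subset[OF M mat_adjoint_carrier[OF M]])
qed

text \<open>Since a Gram matrix \<open>H\<close> is self-adjoint, \<open>H\<^sup>2 v = 0\<close> implies \<open>H v = 0\<close>: the eigenvalue
  \<open>0\<close> of \<open>H\<close> has no Jordan blocks of size \<open>> 1\<close>.\<close>

lemma gram_kernel_square:
  fixes M :: "'a::conjugatable_ordered_field mat"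
  defines "H \<equiv> mat_adjoint M * M"
  assumes M: "M \<in> carrier_mat n m" and v: "v \<in> carrier_vec m" and zero: "H *\<^sub>v (H *\<^sub>v v) = 0\<^sub>v m"
  shows "H *\<^sub>v v = 0\<^sub>v m"
proof -
  have H: "H \<in> carrier_mat m m" unfolding H_def using M by auto
  have "mat_adjoint H = H" unfolding H_def using mat_adjoint_mult[OF mat_adjoint_carrier[OF M] M] by (simp add: mat_adjoint_adjoint)
  hence "(mat_adjoint H * H) *\<^sub>v v = 0\<^sub>v m" using zero H v by (simp add: assoc_mult_mat_vec[of _ m m _ m])
  thus ?thesis by (rule gram_kernel_vec[OF H v])
qed

lemma vec_minus_eq_zero_iff:
  fixes x y :: "'a::field vec"
  assumes "x \<in> carrier_vec n" and "y \<in> carrier_vec n"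
  shows "x - y = 0\<^sub>v n \<longleftrightarrow> x = y"
  using assms by (auto simp: vec_eq_iff)

lemma smult_mat_mult_vec:
  assumes "A \<in> carrier_mat n m" and "v \<in> carrier_vec m"
  shows "(c \<cdot>\<^sub>m A) *\<^sub>v v = c \<cdot>\<^sub>v (A *\<^sub>v v)"
  by (rule eq_vecI) (use assms in \<open>auto simp: scalar_prod_def sum_distrib_left mult.assoc\<close>)

lemma char_matrix_mult_vec:
  fixes X :: "'a::field mat"
  assumes X: "X \<in> carrier_mat n n" and v: "v \<in> carrier_vec n"
  shows "char_matrix X e *\<^sub>v v = X *\<^sub>v v + (-e) \<cdot>\<^sub>v v"
proof -
  have "char_matrix X e *\<^sub>v v = X *\<^sub>v v + ((-e) \<cdot>\<^sub>m 1\<^sub>m n) *\<^sub>v v"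
    unfolding char_matrix_def using X v by (simp add: add_mult_distrib_mat_vec)
  also have "((-e) \<cdot>\<^sub>m 1\<^sub>m n) *\<^sub>v v = (-e) \<cdot>\<^sub>v v"
    using smult_mat_mult_vec[OF one_carrier_mat v] v by simp
  finally show ?thesis .
qed

lemma dim_char_matrix: "dim_row (char_matrix A e) = dim_row A"
  unfolding char_matrix_def by simp

lemma mult_mat_zero_vec: "A \<in> carrier_mat n m \<Longrightarrow> A *\<^sub>v 0\<^sub>v m = 0\<^sub>v n"
  by (rule eq_vecI) (auto simp: scalar_prod_def)

lemma mult_mat_uminus_vec:
  fixes A :: "'a::comm_ring mat"
  assumes "A \<in> carrier_mat n m" and "w \<in> carrier_vec m"
  shows "A *\<^sub>v (- w) = - (A *\<^sub>v w)"
  by (rule eq_vecI) (use assms in \<open>auto simp: scalar_prod_def sum_negf\<close>)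

lemma char_matrix_zero: "X \<in> carrier_mat n n \<Longrightarrow> char_matrix X (0::'a::field) = X"
  unfolding char_matrix_def by (rule eq_matI) auto

lemma char_matrix_one_mult_vec:
  fixes X :: "'a::field mat"
  assumes X: "X \<in> carrier_mat n n" and v: "v \<in> carrier_vec n"
  shows "char_matrix X 1 *\<^sub>v v = - ((1\<^sub>m n - X) *\<^sub>v v)"
proof -
  have "char_matrix X 1 *\<^sub>v v = X *\<^sub>v v + (-1) \<cdot>\<^sub>v v" by (rule char_matrix_mult_vec[OF X v])
  also have "\<dots> = - (1\<^sub>m n *\<^sub>v v - X *\<^sub>v v)" using v X by (auto simp: vec_eq_iff)
  also have "1\<^sub>m n *\<^sub>v v - X *\<^sub>v v = (1\<^sub>m n - X) *\<^sub>v v"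
    by (rule minus_mult_distrib_mat_vec[OF one_carrier_mat X v, symmetric])
  finally show ?thesis .
qed

lemma kernel_fin_dim:
  fixes M :: "'a::field mat"
  assumes M: "M \<in> carrier_mat n n"
  shows "vectorspace.fin_dim class_ring ((module_vec TYPE('a) n)\<lparr>carrier := mat_kernel M\<rparr>)"
proof -
  interpret KM: kernel n n M by (unfold_locales, rule M)
  from kernel_basis_exists[OF M] obtain B where "finite B" "KM.basis B" by auto
  thus ?thesis unfolding KM.Ker.fin_dim_def KM.Ker.basis_def by auto
qed

lemma mat_mult_inj_on_kernel:
  fixes M F :: "'a::field mat"
  assumes M: "M \<in> carrier_mat n n" and F: "F \<in> carrier_mat n n"
    and inj: "\<And>v. v \<in> mat_kernel M \<Longrightarrow> F *\<^sub>v v = 0\<^sub>v n \<Longrightarrow> v = 0\<^sub>v n"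
  shows "inj_on (\<lambda>v. F *\<^sub>v v) (mat_kernel M)"
proof (rule inj_onI)
  fix x y assume x: "x \<in> mat_kernel M" and y: "y \<in> mat_kernel M" and eq: "F *\<^sub>v x = F *\<^sub>v y"
  have xc: "x \<in> carrier_vec n" and yc: "y \<in> carrier_vec n"
    using mat_kernelD[OF M x] mat_kernelD[OF M y] by auto
  have "M *\<^sub>v (x - y) = M *\<^sub>v x - M *\<^sub>v y" using M xc yc by (simp add: mult_minus_distrib_mat_vec)
  also have "\<dots> = 0\<^sub>v n" using mat_kernelD[OF M x] mat_kernelD[OF M y] by auto
  finally have xy: "x - y \<in> mat_kernel M" using M xc yc by (intro mat_kernelI[OF M]) auto
  have "F *\<^sub>v (x - y) = F *\<^sub>v x - F *\<^sub>v y" using F xc yc by (simp add: mult_minus_distrib_mat_vec)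
  also have "\<dots> = 0\<^sub>v n" using eq F xc yc by auto
  finally have "x - y = 0\<^sub>v n" by (rule inj[OF xy])
  thus "x = y" using vec_minus_eq_zero_iff[OF xc yc] by simp
qed

lemma kernel_dim_le_injective:
  fixes M N F :: "'a::field mat"
  assumes M: "M \<in> carrier_mat n n" and N: "N \<in> carrier_mat n n" and F: "F \<in> carrier_mat n n"
    and maps: "\<And>v. v \<in> mat_kernel M \<Longrightarrow> F *\<^sub>v v \<in> mat_kernel N"
    and inj: "\<And>v. v \<in> mat_kernel M \<Longrightarrow> F *\<^sub>v v = 0\<^sub>v n \<Longrightarrow> v = 0\<^sub>v n"
  shows "kernel_dim M \<le> kernel_dim N"
proof -
  interpret KM: kernel n n M by (unfold_locales, rule M)
  interpret KN: kernel n n N by (unfold_locales, rule N)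
  define T where "T = (\<lambda>v. F *\<^sub>v v)"
  have kM: "\<And>v. v \<in> mat_kernel M \<Longrightarrow> v \<in> carrier_vec n" using mat_kernelD[OF M] by auto
  have hom: "T \<in> LinearCombinations.module_hom class_ring KM.VK KN.VK"
    unfolding LinearCombinations.module_hom_def T_def
    using maps kM F by (auto simp: module_vec_simps mult_add_distrib_mat_vec mult_mat_vec)
  have mM: "Module.module class_ring KM.VK"
    using KM.Ker.vectorspace_axioms unfolding vectorspace_def by blast
  have mN: "Module.module class_ring KN.VK"
    using KN.Ker.vectorspace_axioms unfolding vectorspace_def by blast
  interpret L: linear_map class_ring KM.VK KN.VK T
    by (intro linear_map.intro KM.Ker.vectorspace_axioms KN.Ker.vectorspace_axioms mod_hom.intro
       mM mN mod_hom_axioms.intro hom)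
  have "inj_on T (mat_kernel M)" unfolding T_def by (rule mat_mult_inj_on_kernel[OF M F inj])
  hence injT: "inj_on T (carrier KM.VK)" by simp
  have sub: "VectorSpace.subspace class_ring L.imT KN.VK" by (rule L.imT_is_subspace)
  interpret Im: vectorspace class_ring "KN.Ker.vs L.imT"
    by (rule KN.Ker.subspace_is_vs[OF sub])
  have hom_im: "T \<in> LinearCombinations.module_hom class_ring KM.VK (KN.Ker.vs L.imT)"
    using hom unfolding LinearCombinations.module_hom_def mod_hom.im_def[OF L.mod_hom_axioms] by auto
  have mI: "Module.module class_ring (KN.Ker.vs L.imT)"
    using Im.vectorspace_axioms unfolding vectorspace_def by blast
  interpret L_im: linear_map class_ring KM.VK "KN.Ker.vs L.imT" T
    by (intro linear_map.intro KM.Ker.vectorspace_axioms Im.vectorspace_axioms mod_hom.intro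
       mM mI mod_hom_axioms.intro hom_im)
  have surj: "T ` carrier KM.VK = carrier (KN.Ker.vs L.imT)"
    by (simp add: mod_hom.im_def[OF L.mod_hom_axioms])
  have fdM: "KM.Ker.fin_dim" using kernel_fin_dim[OF M] .
  have "KM.dim = Im.dim" by (rule L_im.dim_eq[OF fdM injT surj])
  also have "Im.dim \<le> KN.dim"
    by (rule KN.Ker.subspace_dim[OF sub kernel_fin_dim[OF N] L_im.surj_fin_dim[OF fdM surj]])
  finally show ?thesis by (simp only: KM.kernel_dim KN.kernel_dim)
qed

lemma kernel_dim_cong:
  fixes M N :: "'a::field mat"
  assumes M: "M \<in> carrier_mat n n" and N: "N \<in> carrier_mat n n"
    and eq: "mat_kernel M = mat_kernel N"
  shows "kernel_dim M = kernel_dim N"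
proof -
  have carrier: "\<And>v. v \<in> mat_kernel M \<Longrightarrow> v \<in> carrier_vec n" using mat_kernelD[OF M] by auto
  have "kernel_dim M \<le> kernel_dim N"
    by (rule kernel_dim_le_injective[OF M N one_carrier_mat]) (use carrier eq in auto)
  moreover have "kernel_dim N \<le> kernel_dim M"
    by (rule kernel_dim_le_injective[OF N M one_carrier_mat]) (use carrier eq in auto)
  ultimately show ?thesis by simp
qed

lemma kernel_dim_trivial:
  fixes M :: "'a::field mat"
  assumes M: "M \<in> carrier_mat n n" and trivial: "\<And>v. v \<in> mat_kernel M \<Longrightarrow> v = 0\<^sub>v n"
  shows "kernel_dim M = 0"
proof -
  have "kernel_dim M \<le> kernel_dim (1\<^sub>m n :: 'a mat)"
  proof (rule kernel_dim_le_injective[OF M one_carrier_mat one_carrier_mat])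
    fix v assume "v \<in> mat_kernel M"
    hence v0: "v = 0\<^sub>v n" by (rule trivial)
    show "1\<^sub>m n *\<^sub>v v \<in> mat_kernel (1\<^sub>m n)"
      unfolding v0 by (rule mat_kernelI[OF one_carrier_mat]) auto
  qed (rule trivial)
  also have "kernel_dim (1\<^sub>m n :: 'a mat) = 0"
    unfolding kernel_dim_def using kernel_one_mat(1)[of n, where 'a='a] by simp
  finally show ?thesis by simp
qed

lemma kernel_pow_stable:
  fixes M :: "'a::field mat"
  assumes M: "M \<in> carrier_mat n n"
    and stable: "\<And>v. v \<in> carrier_vec n \<Longrightarrow> M *\<^sub>v (M *\<^sub>v v) = 0\<^sub>v n \<Longrightarrow> M *\<^sub>v v = 0\<^sub>v n"
  shows "mat_kernel (M ^\<^sub>m Suc k) = mat_kernel M"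
proof -
  have "v \<in> carrier_vec n \<Longrightarrow> (M ^\<^sub>m Suc k) *\<^sub>v v = 0\<^sub>v n \<longleftrightarrow> M *\<^sub>v v = 0\<^sub>v n" for v
  proof (induct k arbitrary: v)
    case (Suc k)
    have Mv: "M *\<^sub>v v \<in> carrier_vec n" using M Suc by auto
    have "(M ^\<^sub>m Suc (Suc k)) *\<^sub>v v = (M ^\<^sub>m Suc k) *\<^sub>v (M *\<^sub>v v)"
      using M Suc by (simp del: pow_mat.simps
          add: pow_mat.simps(2)[of M "Suc k"] assoc_mult_mat_vec[of _ n n M n])
    also have "\<dots> = 0\<^sub>v n \<longleftrightarrow> M *\<^sub>v (M *\<^sub>v v) = 0\<^sub>v n" using Suc(1)[OF Mv] .
    also have "\<dots> \<longleftrightarrow> M *\<^sub>v v = 0\<^sub>v n" using stable[OF Suc(2)] M by auto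
    finally show ?case .
  qed (use M in simp)
  thus ?thesis using M by (auto simp: mat_kernel_def)
qed

text \<open>Algebraic multiplicity equals the dimension of the generalized eigenspace
  \<open>ker (M - a)\<^sup>k\<close> once \<open>k \<ge> n\<close>; this is read off from the Jordan normal form.\<close>

lemma eig_mult_dim_gen_eigenspace:
  fixes M :: "complex mat"
  assumes M: "M \<in> carrier_mat n n" and k: "n \<le> k"
  shows "eig_mult M a = dim_gen_eigenspace M a k"
proof -
  from char_poly_factorized[OF M] obtain as where "char_poly M = (\<Prod>a\<leftarrow>as. [:- a, 1:])" by auto
  from jordan_nf_exists[OF M this] obtain n_as where jnf: "jordan_nf M n_as" by auto
  let ?L = "map fst (filter (\<lambda>na. snd na = a) n_as)"
  have ord: "eig_mult M a = sum_list ?L" unfolding eig_mult_def by (rule jordan_nf_order[OF jnf])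
  have "filter (\<lambda>(n,e). e = a) n_as = filter (\<lambda>na. snd na = a) n_as"
    by (rule filter_cong) auto
  hence dim: "dim_gen_eigenspace M a k = sum_list (map (min k) ?L)"
    using dim_gen_eigenspace[OF jnf, of a k] by simp
  have "char_poly M \<noteq> 0" and "degree (char_poly M) = n"
    using degree_monic_char_poly[OF M] by auto
  hence "sum_list ?L \<le> n" using ord order_degree unfolding eig_mult_def by metis
  hence bound: "d \<le> k" if "d \<in> set ?L" for d
    using member_le_sum_list[OF that] k by linarith
  have "map (min k) ?L = ?L" by (rule map_idI, rule min_absorb2, rule bound)
  thus ?thesis by (simp only: ord dim)
qed

lemma eig_mult_semisimple:
  fixes M :: "complex mat"
  assumes M: "M \<in> carrier_mat n n"
    and stable: "\<And>v. v \<in> carrier_vec n \<Longrightarrow>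
      char_matrix M a *\<^sub>v (char_matrix M a *\<^sub>v v) = 0\<^sub>v n \<Longrightarrow> char_matrix M a *\<^sub>v v = 0\<^sub>v n"
  shows "eig_mult M a = kernel_dim (char_matrix M a)"
proof -
  have C: "char_matrix M a \<in> carrier_mat n n" using M by simp
  have "eig_mult M a = dim_gen_eigenspace M a (Suc n)"
    by (rule eig_mult_dim_gen_eigenspace[OF M]) simp
  also have "\<dots> = kernel_dim (char_matrix M a)"
    unfolding dim_gen_eigenspace_def
    by (rule kernel_dim_cong[OF pow_carrier_mat[OF C] C kernel_pow_stable[OF C stable]])
  finally show ?thesis .
qed

lemma eig_mult_gram_zero:
  fixes M :: "complex mat"
  assumes M: "M \<in> carrier_mat n n"
  shows "eig_mult (mat_adjoint M * M) 0 = kernel_dim M"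
proof -
  have H: "mat_adjoint M * M \<in> carrier_mat n n" using M by auto
  have "eig_mult (mat_adjoint M * M) 0 = kernel_dim (char_matrix (mat_adjoint M * M) 0)"
    by (rule eig_mult_semisimple[OF H], unfold char_matrix_zero[OF H]) (rule gram_kernel_square[OF M])
  also have "\<dots> = kernel_dim M"
    unfolding char_matrix_zero[OF H] by (rule kernel_dim_cong[OF H M gram_kernel[OF M]])
  finally show ?thesis .
qed

lemma size_mset_split:
  assumes "finite S"
  shows "size X = (\<Sum>a\<in>S. count X a) + size (filter_mset (\<lambda>a. a \<notin> S) X)"
proof (induct X)
  case (add x X)
  have "(\<Sum>a\<in>S. count (add_mset x X) a) = (\<Sum>a\<in>S. count X a + (if a = x then 1 else 0))"
    by (intro sum.cong) auto
  also have "\<dots> = (\<Sum>a\<in>S. count X a) + (if x \<in> S then 1 else 0)"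
    using assms by (simp add: sum.distrib)
  finally show ?case using add by auto
qed simp

lemma eig_mult_split:
  fixes M :: "complex mat"
  assumes M: "M \<in> carrier_mat n n" and S: "finite S"
  shows "n = (\<Sum>a\<in>S. eig_mult M a) + size (filter_mset (\<lambda>a. a \<notin> S) (proots (char_poly M)))"
proof -
  have "char_poly M \<noteq> 0" and "degree (char_poly M) = n"
    using degree_monic_char_poly[OF M] by auto
  thus ?thesis
    using size_mset_split[OF S, of "proots (char_poly M)"] size_proots_complex[of "char_poly M"]
    by (simp add: eig_mult_def)
qed

lemma eig_mult_sum_supported:
  fixes M :: "complex mat"
  assumes M: "M \<in> carrier_mat n n" and S: "finite S" and zero: "\<And>e. e \<notin> S \<Longrightarrow> eig_mult M e = 0"
  shows "(\<Sum>a\<in>S. eig_mult M a) = n"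
proof -
  have "char_poly M \<noteq> 0" using degree_monic_char_poly[OF M] by auto
  hence "filter_mset (\<lambda>a. a \<notin> S) (proots (char_poly M)) = {#}"
    using zero by (intro multiset_eqI) (simp add: eig_mult_def)
  thus ?thesis using eig_mult_split[OF M S] by simp
qed

lemma eig_mult_sum_agree:
  fixes M N :: "complex mat"
  assumes M: "M \<in> carrier_mat n n" and N: "N \<in> carrier_mat n n" and S: "finite S"
    and agree: "\<And>e. e \<notin> S \<Longrightarrow> eig_mult M e = eig_mult N e"
  shows "(\<Sum>a\<in>S. eig_mult M a) = (\<Sum>a\<in>S. eig_mult N a)"
proof -
  have "char_poly M \<noteq> 0" "char_poly N \<noteq> 0"
    using degree_monic_char_poly[OF M] degree_monic_char_poly[OF N] by auto
  hence "filter_mset (\<lambda>a. a \<notin> S) (proots (char_poly M)) = filter_mset (\<lambda>a. a \<notin> S) (proots (char_poly N))"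
    using agree by (intro multiset_eqI) (simp add: eig_mult_def)
  thus ?thesis using eig_mult_split[OF M S] eig_mult_split[OF N S] by simp
qed

lemma char_matrix_pow_intertwine:
  fixes X Y F :: "'a::field mat"
  assumes X: "X \<in> carrier_mat n n" and Y: "Y \<in> carrier_mat n n" and F: "F \<in> carrier_mat n n"
    and YF: "Y * F = F * X"
  shows "char_matrix Y e ^\<^sub>m k * F = F * char_matrix X e ^\<^sub>m k"
proof (induct k)
  case 0
  then show ?case using X Y F by (simp add: dim_char_matrix)
next
  case (Suc k)
  let ?CX = "char_matrix X e" and ?CY = "char_matrix Y e"
  have CX: "?CX \<in> carrier_mat n n" and CY: "?CY \<in> carrier_mat n n" using X Y by auto
  have step: "?CY * F = F * ?CX"
  proof -
    have "?CY * F = Y * F + (-e) \<cdot>\<^sub>m F"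
      unfolding char_matrix_def using Y F
      by (simp add: add_mult_distrib_mat mult_smult_assoc_mat[OF one_carrier_mat F])
    also have "\<dots> = F * ?CX"
      unfolding char_matrix_def YF using X F
      by (simp add: mult_add_distrib_mat mult_smult_distrib[OF F one_carrier_mat])
    finally show ?thesis .
  qed
  have "?CY ^\<^sub>m Suc k * F = ?CY ^\<^sub>m k * (?CY * F)"
    using CY F by (simp add: assoc_mult_mat[of _ n n _ n _ n])
  also have "\<dots> = (?CY ^\<^sub>m k * F) * ?CX"
    unfolding step using CY CX F by (simp add: assoc_mult_mat[of _ n n _ n _ n])
  also have "\<dots> = F * ?CX ^\<^sub>m Suc k"
    unfolding Suc using CX F by (simp add: assoc_mult_mat[of _ n n _ n _ n])
  finally show ?case .
qed

text \<open>The polynomials \<open>x\<^sup>2 - x\<close> and \<open>(x - e)\<^sup>k\<close> are coprime for \<open>e \<notin> {0, 1}\<close>, hence no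
  nonzero vector is annihilated by both \<open>X\<^sup>2 - X\<close> and \<open>(X - e)\<^sup>k\<close>.\<close>

lemma gen_eigenvector_idempotent_zero:
  fixes X :: "'a::field mat"
  assumes X: "X \<in> carrier_mat n n" and e0: "e \<noteq> 0" and e1: "e \<noteq> 1"
  shows "v \<in> carrier_vec n \<Longrightarrow> X *\<^sub>v (X *\<^sub>v v) = X *\<^sub>v v \<Longrightarrow>
    (char_matrix X e ^\<^sub>m k) *\<^sub>v v = 0\<^sub>v n \<Longrightarrow> v = 0\<^sub>v n"
proof (induct k arbitrary: v)
  case 0
  then show ?case using X by (simp add: dim_char_matrix)
next
  case (Suc k)
  let ?C = "char_matrix X e"
  have C: "?C \<in> carrier_mat n n" using X by simp
  have v: "v \<in> carrier_vec n" and XXv: "X *\<^sub>v (X *\<^sub>v v) = X *\<^sub>v v" by fact+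
  have Xv: "X *\<^sub>v v \<in> carrier_vec n" using X v by simp
  define w where "w = ?C *\<^sub>v v"
  have w: "w \<in> carrier_vec n" unfolding w_def using C v by simp
  have w_eq: "w = X *\<^sub>v v + (-e) \<cdot>\<^sub>v v" unfolding w_def by (rule char_matrix_mult_vec[OF X v])
  have Xw: "X *\<^sub>v w = X *\<^sub>v v + (-e) \<cdot>\<^sub>v (X *\<^sub>v v)"
    unfolding w_eq using X v Xv XXv by (simp add: mult_add_distrib_mat_vec mult_mat_vec)
  have XXw: "X *\<^sub>v (X *\<^sub>v w) = X *\<^sub>v w"
    unfolding Xw using X v Xv XXv by (simp add: mult_add_distrib_mat_vec mult_mat_vec)
  have "(?C ^\<^sub>m k) *\<^sub>v w = (?C ^\<^sub>m Suc k) *\<^sub>v v"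
    unfolding w_def using C v by (simp add: assoc_mult_mat_vec[of _ n n _ n])
  hence "w = 0\<^sub>v n" using Suc(1)[OF w XXw] Suc(4) by simp
  hence eigen: "X *\<^sub>v v = e \<cdot>\<^sub>v v"
    using w_eq v Xv X by (auto simp: vec_eq_iff)
  hence "e \<cdot>\<^sub>v (e \<cdot>\<^sub>v v) = e \<cdot>\<^sub>v v"
    using XXv X v by (simp add: mult_mat_vec)
  hence "(e * e - e) * v $ i = 0" if "i < n" for i
    using that v by (auto simp: vec_eq_iff algebra_simps)
  moreover have "e * e - e \<noteq> 0" using e0 e1 by (simp add: right_diff_distrib'[symmetric])
  ultimately show "v = 0\<^sub>v n" using v by (auto simp: vec_eq_iff)
qed

lemma dim_gen_eigenspace_le_intertwine:
  fixes X Y F G :: "'a::field mat"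
  assumes X: "X \<in> carrier_mat n n" and Y: "Y \<in> carrier_mat n n"
    and F: "F \<in> carrier_mat n n" and G: "G \<in> carrier_mat n n"
    and YF: "Y * F = F * X" and GF: "G * F = X * X - X" and e0: "e \<noteq> 0" and e1: "e \<noteq> 1"
  shows "dim_gen_eigenspace X e k \<le> dim_gen_eigenspace Y e k"
  unfolding dim_gen_eigenspace_def
proof (rule kernel_dim_le_injective[OF _ _ F])
  let ?K = "char_matrix X e ^\<^sub>m k" and ?L = "char_matrix Y e ^\<^sub>m k"
  show K: "?K \<in> carrier_mat n n" and L: "?L \<in> carrier_mat n n" using X Y by auto
  have LF: "?L * F = F * ?K" by (rule char_matrix_pow_intertwine[OF X Y F YF])
  fix v assume v: "v \<in> mat_kernel ?K"
  from mat_kernelD[OF K v] have vc: "v \<in> carrier_vec n" and Kv: "?K *\<^sub>v v = 0\<^sub>v n" by auto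
  have "?L *\<^sub>v (F *\<^sub>v v) = F *\<^sub>v (?K *\<^sub>v v)"
    using assoc_mult_mat_vec[OF L F vc] assoc_mult_mat_vec[OF F K vc] LF by simp
  also have "\<dots> = 0\<^sub>v n" unfolding Kv by (rule mult_mat_zero_vec[OF F])
  finally show "F *\<^sub>v v \<in> mat_kernel ?L" using F vc by (intro mat_kernelI[OF L]) auto
  assume Fv: "F *\<^sub>v v = 0\<^sub>v n"
  have "(X * X - X) *\<^sub>v v = G *\<^sub>v (F *\<^sub>v v)"
    unfolding GF[symmetric] using assoc_mult_mat_vec[OF G F vc] by simp
  also have "\<dots> = 0\<^sub>v n" unfolding Fv by (rule mult_mat_zero_vec[OF G])
  finally have "X *\<^sub>v (X *\<^sub>v v) - X *\<^sub>v v = 0\<^sub>v n"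
    using minus_mult_distrib_mat_vec[OF mult_carrier_mat[OF X X] X vc] assoc_mult_mat_vec[OF X X vc]
    by simp
  hence "X *\<^sub>v (X *\<^sub>v v) = X *\<^sub>v v" using vec_minus_eq_zero_iff X vc by (metis mult_mat_vec_carrier)
  thus "v = 0\<^sub>v n" by (rule gen_eigenvector_idempotent_zero[OF X e0 e1 vc _ Kv])
qed

lemma eig_mult_idempotent:
  fixes X :: "complex mat"
  assumes X: "X \<in> carrier_mat n n" and XX: "X * X = X" and e0: "e \<noteq> 0" and e1: "e \<noteq> 1"
  shows "eig_mult X e = 0"
proof -
  have "eig_mult X e = dim_gen_eigenspace X e n"
    by (rule eig_mult_dim_gen_eigenspace[OF X]) simp
  also have "\<dots> = 0" unfolding dim_gen_eigenspace_def
  proof (rule kernel_dim_trivial)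
    show K: "char_matrix X e ^\<^sub>m n \<in> carrier_mat n n" using X by simp
    fix v assume "v \<in> mat_kernel (char_matrix X e ^\<^sub>m n)"
    from mat_kernelD[OF K this] have v: "v \<in> carrier_vec n" and Kv: "(char_matrix X e ^\<^sub>m n) *\<^sub>v v = 0\<^sub>v n"
      by auto
    have "X *\<^sub>v (X *\<^sub>v v) = X *\<^sub>v v" using assoc_mult_mat_vec[OF X X v] XX by simp
    from gen_eigenvector_idempotent_zero[OF X e0 e1 v this Kv] show "v = 0\<^sub>v n" .
  qed
  finally show ?thesis .
qed

text \<open>With \<open>p = P\<close>, \<open>q = P\<^sup>\<dagger>\<close> this relates \<open>P\<^sup>\<dagger>P\<close> and \<open>Q\<^sup>\<dagger>Q\<close>.\<close>

lemma (in ring) idempotent_intertwine: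
  assumes p: "p \<in> carrier R" and q: "q \<in> carrier R" and pp: "p \<otimes> p = p" and qq: "q \<otimes> q = q"
  shows "(\<one> \<ominus> q) \<otimes> (\<one> \<ominus> p) \<otimes> ((\<one> \<ominus> q) \<otimes> p) = ((\<one> \<ominus> q) \<otimes> p) \<otimes> (q \<otimes> p)"
    and "q \<otimes> (\<one> \<ominus> p) \<otimes> ((\<one> \<ominus> q) \<otimes> p) = (q \<otimes> p) \<otimes> (q \<otimes> p) \<ominus> q \<otimes> p"
proof -
  have pp': "\<And>x. x \<in> carrier R \<Longrightarrow> p \<otimes> (p \<otimes> x) = p \<otimes> x" using pp p by (simp add: m_assoc[symmetric])
  have qq': "\<And>x. x \<in> carrier R \<Longrightarrow> q \<otimes> (q \<otimes> x) = q \<otimes> x" using qq q by (simp add: m_assoc[symmetric])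
  show "(\<one> \<ominus> q) \<otimes> (\<one> \<ominus> p) \<otimes> ((\<one> \<ominus> q) \<otimes> p) = ((\<one> \<ominus> q) \<otimes> p) \<otimes> (q \<otimes> p)"
    and "q \<otimes> (\<one> \<ominus> p) \<otimes> ((\<one> \<ominus> q) \<otimes> p) = (q \<otimes> p) \<otimes> (q \<otimes> p) \<ominus> q \<otimes> p"
    using p q pp qq pp' qq'
    by (simp_all add: a_minus_def r_distr l_distr m_assoc r_minus l_minus minus_add minus_minus
        r_neg1 r_neg2 a_ac)
qed

lemma (in ring) idempotent_complement:
  assumes p: "p \<in> carrier R" and pp: "p \<otimes> p = p"
  shows "(\<one> \<ominus> p) \<otimes> (\<one> \<ominus> p) = \<one> \<ominus> p"
  using p pp by (simp add: a_minus_def r_distr l_distr m_assoc r_minus l_minus minus_add minus_minus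
      r_neg1 r_neg2 a_ac)

lemma ring_mat_minus:
  fixes A B :: "'a::comm_ring_1 mat"
  assumes A: "A \<in> carrier_mat n n" and B: "B \<in> carrier_mat n n"
  shows "A \<ominus>\<^bsub>ring_mat TYPE('a) n b\<^esub> B = A - B"
proof -
  interpret R: ring "ring_mat TYPE('a) n b" by (rule ring_mat)
  have "\<ominus>\<^bsub>ring_mat TYPE('a) n b\<^esub> B = - B"
    by (rule R.minus_equality) (use B in \<open>auto simp: ring_mat_simps\<close>)
  thus ?thesis unfolding a_minus_def using A B by (simp add: ring_mat_simps minus_add_uminus_mat)
qed

lemma idempotent_intertwine_mat:
  fixes P P' :: "'a::comm_ring_1 mat"
  assumes P: "P \<in> carrier_mat n n" and P': "P' \<in> carrier_mat n n"
    and PP: "P * P = P" and PP': "P' * P' = P'"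
  shows "(1\<^sub>m n - P') * (1\<^sub>m n - P) * ((1\<^sub>m n - P') * P) = ((1\<^sub>m n - P') * P) * (P' * P)"
    and "(P' * (1\<^sub>m n - P)) * ((1\<^sub>m n - P') * P) = (P' * P) * (P' * P) - P' * P"
proof -
  let ?R = "ring_mat TYPE('a) n ()"
  interpret R: ring ?R by (rule ring_mat)
  have c: "P \<in> carrier ?R" "P' \<in> carrier ?R" using P P' by (auto simp: ring_mat_simps)
  have idem: "P \<otimes>\<^bsub>?R\<^esub> P = P" "P' \<otimes>\<^bsub>?R\<^esub> P' = P'" using PP PP' by (auto simp: ring_mat_simps)
  have minus: "\<And>X Y. X \<in> carrier_mat n n \<Longrightarrow> Y \<in> carrier_mat n n \<Longrightarrow> X \<ominus>\<^bsub>?R\<^esub> Y = X - Y"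
    by (rule ring_mat_minus)
  show "(1\<^sub>m n - P') * (1\<^sub>m n - P) * ((1\<^sub>m n - P') * P) = ((1\<^sub>m n - P') * P) * (P' * P)"
    using R.idempotent_intertwine(1)[OF c idem] P P' by (simp add: ring_mat_simps minus)
  show "(P' * (1\<^sub>m n - P)) * ((1\<^sub>m n - P') * P) = (P' * P) * (P' * P) - P' * P"
    using R.idempotent_intertwine(2)[OF c idem] P P' minus[of "P' * P * (P' * P)" "P' * P"]
    by (simp add: ring_mat_simps minus)
qed

lemma idempotent_complement_mat:
  fixes P :: "'a::comm_ring_1 mat"
  assumes P: "P \<in> carrier_mat n n" and PP: "P * P = P"
  shows "(1\<^sub>m n - P) * (1\<^sub>m n - P) = 1\<^sub>m n - P"
proof -
  let ?R = "ring_mat TYPE('a) n ()"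
  interpret R: ring ?R by (rule ring_mat)
  have "P \<in> carrier ?R" and "P \<otimes>\<^bsub>?R\<^esub> P = P" using P PP by (auto simp: ring_mat_simps)
  from R.idempotent_complement[OF this] show ?thesis
    using P by (simp add: ring_mat_simps ring_mat_minus)
qed

text \<open>For an idempotent \<open>P\<close> with complement \<open>Q = 1 - P\<close>: \<open>dim ker P + dim ker Q = n\<close>, because
  the multiplicities of \<open>0\<close> and \<open>1\<close> of \<open>P\<close> are these two dimensions and add up to \<open>n\<close>.\<close>

lemma idempotent_kernel_dims:
  fixes P :: "complex mat"
  assumes P: "P \<in> carrier_mat n n" and PP: "P * P = P"
  shows "kernel_dim P + kernel_dim (1\<^sub>m n - P) = n"
proof -
  let ?Q = "1\<^sub>m n - P" and ?C = "char_matrix P 1"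
  have Q: "?Q \<in> carrier_mat n n" and C: "?C \<in> carrier_mat n n" using P by auto
  have PPv: "P *\<^sub>v (P *\<^sub>v v) = P *\<^sub>v v" if "v \<in> carrier_vec n" for v
    using assoc_mult_mat_vec[OF P P that] PP by simp
  note Cv = char_matrix_one_mult_vec[OF P]
  have "eig_mult P 0 = kernel_dim (char_matrix P 0)"
    by (rule eig_mult_semisimple[OF P], unfold char_matrix_zero[OF P]) (simp add: PPv)
  hence "eig_mult P 0 = kernel_dim P" unfolding char_matrix_zero[OF P] .
  moreover have "eig_mult P 1 = kernel_dim ?C"
  proof (rule eig_mult_semisimple[OF P])
    fix v :: "complex vec" assume v: "v \<in> carrier_vec n" and CCv: "?C *\<^sub>v (?C *\<^sub>v v) = 0\<^sub>v n"
    have "?Q *\<^sub>v v = ?Q *\<^sub>v (?Q *\<^sub>v v)"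
      using assoc_mult_mat_vec[OF Q Q v] idempotent_complement_mat[OF P PP] by simp
    also have "\<dots> = ?C *\<^sub>v (?C *\<^sub>v v)"
      using Cv v Q by (simp add: mult_mat_uminus_vec)
    finally have "?Q *\<^sub>v v = 0\<^sub>v n" unfolding CCv .
    thus "?C *\<^sub>v v = 0\<^sub>v n" using Cv[OF v] by simp
  qed
  moreover have "kernel_dim ?C = kernel_dim ?Q"
  proof (rule kernel_dim_cong[OF C Q])
    have "?C *\<^sub>v v = 0\<^sub>v n \<longleftrightarrow> ?Q *\<^sub>v v = 0\<^sub>v n" if v: "v \<in> carrier_vec n" for v
    proof -
      have "?Q *\<^sub>v v \<in> carrier_vec n" using Q v by simp
      thus ?thesis unfolding Cv[OF v] by (rule uminus_zero_vec_eq)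
    qed
    thus "mat_kernel ?C = mat_kernel ?Q" unfolding mat_kernel[OF C] mat_kernel[OF Q] by blast
  qed
  moreover have "(\<Sum>a\<in>{0,1}. eig_mult P a) = n"
    by (rule eig_mult_sum_supported[OF P]) (use eig_mult_idempotent[OF P PP] in auto)
  ultimately show ?thesis by simp
qed

text \<open>The roles of \<open>P\<close> and \<open>Q\<close> are symmetric, which gives
  the inequality both ways.\<close>

lemma gram_idempotent_eig_mult_agree:
  fixes P :: "complex mat"
  assumes P: "P \<in> carrier_mat n n" and PP: "P * P = P" and e0: "e \<noteq> 0" and e1: "e \<noteq> 1"
  shows "eig_mult (mat_adjoint P * P) e = eig_mult (mat_adjoint (1\<^sub>m n - P) * (1\<^sub>m n - P)) e"
proof -
  have le: "eig_mult (mat_adjoint P * P) e \<le> eig_mult (mat_adjoint (1\<^sub>m n - P) * (1\<^sub>m n - P)) e"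
    if P: "P \<in> carrier_mat n n" and PP: "P * P = P" for P :: "complex mat"
  proof -
    let ?P' = "mat_adjoint P" and ?Q = "1\<^sub>m n - P"
    have P': "?P' \<in> carrier_mat n n" using P by simp
    have PP': "?P' * ?P' = ?P'" using mat_adjoint_mult[OF P P] PP by simp
    have Q': "mat_adjoint ?Q = 1\<^sub>m n - ?P'"
      using mat_adjoint_minus[OF one_carrier_mat P] by (simp add: mat_adjoint_one)
    have A: "?P' * P \<in> carrier_mat n n" and B: "mat_adjoint ?Q * ?Q \<in> carrier_mat n n"
      using P by auto
    note ids = idempotent_intertwine_mat[OF P P' PP PP', folded Q']
    have "dim_gen_eigenspace (?P' * P) e n \<le> dim_gen_eigenspace (mat_adjoint ?Q * ?Q) e n"
      by (rule dim_gen_eigenspace_le_intertwine[OF A B _ _ ids e0 e1]) (use P in auto)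
    thus ?thesis
      unfolding eig_mult_dim_gen_eigenspace[OF A order.refl] eig_mult_dim_gen_eigenspace[OF B order.refl] .
  qed
  have Q: "1\<^sub>m n - P \<in> carrier_mat n n" by (rule minus_carrier_mat[OF P])
  have "1\<^sub>m n - (1\<^sub>m n - P) = P" by (rule eq_matI) (use P in auto)
  thus ?thesis using le[OF P PP] le[OF Q idempotent_complement_mat[OF P PP]] by simp
qed

lemma gram_idempotent_eig_mult:
  fixes P :: "complex mat"
  assumes P: "P \<in> carrier_mat n n" and PP: "P * P = P"
  defines "A \<equiv> mat_adjoint P * P" and "B \<equiv> mat_adjoint (1\<^sub>m n - P) * (1\<^sub>m n - P)"
  shows "eig_mult B 0 + eig_mult A 0 = n"
    and "eig_mult B 0 + eig_mult B 1 = eig_mult A 0 + eig_mult A 1"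
proof -
  have Q: "1\<^sub>m n - P \<in> carrier_mat n n" by (rule minus_carrier_mat[OF P])
  show "eig_mult B 0 + eig_mult A 0 = n"
    unfolding A_def B_def eig_mult_gram_zero[OF P] eig_mult_gram_zero[OF Q]
    using idempotent_kernel_dims[OF P PP] by simp
  have "(\<Sum>a\<in>{0,1}. eig_mult A a) = (\<Sum>a\<in>{0,1}. eig_mult B a)"
    unfolding A_def B_def
    by (rule eig_mult_sum_agree) (use P gram_idempotent_eig_mult_agree[OF P PP] in auto)
  thus "eig_mult B 0 + eig_mult B 1 = eig_mult A 0 + eig_mult A 1" by simp
qed

lemma eig_mult_gram_of_real:
  fixes M :: "real mat"
  assumes M: "M \<in> carrier_mat n n"
  shows "eig_mult (mat_adjoint M * M) a =
    eig_mult (mat_adjoint (map_mat complex_of_real M) * map_mat complex_of_real M) (complex_of_real a)"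
proof -
  have H: "mat_adjoint M * M \<in> carrier_mat n n" using M by auto
  have "mat_adjoint (map_mat complex_of_real M) = map_mat complex_of_real (mat_adjoint M)"
    by (rule eq_matI) auto
  hence "mat_adjoint (map_mat complex_of_real M) * map_mat complex_of_real M
      = map_mat complex_of_real (mat_adjoint M * M)"
    by (simp only: of_real_hom.mat_hom_mult[OF mat_adjoint_carrier[OF M] M])
  hence "char_poly (mat_adjoint (map_mat complex_of_real M) * map_mat complex_of_real M)
      = map_poly complex_of_real (char_poly (mat_adjoint M * M))"
    using of_real_hom.char_poly_hom[OF H] by simp
  moreover have hom: "map_poly_inj_idom_divide_hom complex_of_real" by unfold_locales
  ultimately show ?thesis
    unfolding eig_mult_def using map_poly_inj_idom_divide_hom.order_hom[OF hom] by simp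
qed

lemma gram_idempotent_eig_mult_real:
  fixes P :: "real mat"
  assumes P: "P \<in> carrier_mat n n" and PP: "P * P = P"
  defines "A \<equiv> mat_adjoint P * P" and "B \<equiv> mat_adjoint (1\<^sub>m n - P) * (1\<^sub>m n - P)"
  shows "eig_mult B 0 + eig_mult A 0 = n"
    and "eig_mult B 0 + eig_mult B 1 = eig_mult A 0 + eig_mult A 1"
proof -
  let ?Pc = "map_mat complex_of_real P"
  have Pc: "?Pc \<in> carrier_mat n n" using P by simp
  have PPc: "?Pc * ?Pc = ?Pc"
    using of_real_hom.mat_hom_mult[OF P P, symmetric] unfolding PP .
  have Q: "1\<^sub>m n - P \<in> carrier_mat n n" by (rule minus_carrier_mat[OF P])
  have Qc: "map_mat complex_of_real (1\<^sub>m n - P) = 1\<^sub>m n - ?Pc" by (rule eq_matI) (use P in auto)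
  have A: "eig_mult A a = eig_mult (mat_adjoint ?Pc * ?Pc) (complex_of_real a)" for a
    unfolding A_def by (rule eig_mult_gram_of_real[OF P])
  have B: "eig_mult B a = eig_mult (mat_adjoint (1\<^sub>m n - ?Pc) * (1\<^sub>m n - ?Pc)) (complex_of_real a)"
    for a using eig_mult_gram_of_real[OF Q, of a] unfolding B_def Qc .
  note complex = gram_idempotent_eig_mult[OF Pc PPc]
  show "eig_mult B 0 + eig_mult A 0 = n"
    unfolding A B of_real_0 by (rule complex(1))
  show "eig_mult B 0 + eig_mult B 1 = eig_mult A 0 + eig_mult A 1"
    unfolding A B of_real_0 of_real_1 by (rule complex(2))
qed

theorem theorem13:
  shows "(\<forall>(n::nat) (P::real mat).
            P \<in> carrier_mat n n \<longrightarrow> P * P = P \<longrightarrow>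
            (let Q = 1\<^sub>m n - P;
                 r0 = eig_mult (mat_adjoint P * P) 0;
                 r1 = eig_mult (mat_adjoint P * P) 1
             in eig_mult (mat_adjoint Q * Q) 0 = n - r0 \<and>
                int (eig_mult (mat_adjoint Q * Q) 1) = 2 * int r0 + int r1 - int n))
       \<and> (\<forall>(n::nat) (P::complex mat).
            P \<in> carrier_mat n n \<longrightarrow> P * P = P \<longrightarrow>
            (let Q = 1\<^sub>m n - P;
                 r0 = eig_mult (mat_adjoint P * P) 0;
                 r1 = eig_mult (mat_adjoint P * P) 1
             in eig_mult (mat_adjoint Q * Q) 0 = n - r0 \<and>
                int (eig_mult (mat_adjoint Q * Q) 1) = 2 * int r0 + int r1 - int n))"
proof (intro conjI allI impI)
  fix n :: nat and P :: "real mat"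
  assume "P \<in> carrier_mat n n" and "P * P = P"
  from gram_idempotent_eig_mult_real[OF this] show "let Q = 1\<^sub>m n - P;
                 r0 = eig_mult (mat_adjoint P * P) 0;
                 r1 = eig_mult (mat_adjoint P * P) 1
             in eig_mult (mat_adjoint Q * Q) 0 = n - r0 \<and>
                int (eig_mult (mat_adjoint Q * Q) 1) = 2 * int r0 + int r1 - int n"
    unfolding Let_def by arith
next
  fix n :: nat and P :: "complex mat"
  assume "P \<in> carrier_mat n n" and "P * P = P"
  from gram_idempotent_eig_mult[OF this] show "let Q = 1\<^sub>m n - P;
                 r0 = eig_mult (mat_adjoint P * P) 0;
                 r1 = eig_mult (mat_adjoint P * P) 1
             in eig_mult (mat_adjoint Q * Q) 0 = n - r0 \<and>
                int (eig_mult (mat_adjoint Q * Q) 1) = 2 * int r0 + int r1 - int n"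
    unfolding Let_def by arith
qed

end
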